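(* Let $L$ and $M$ be finite-dimensional stem Lie superalgebras that are isoclinic. Then there exists a factor set $r$ on $L$ such that $M\cong (Z(L),L/Z(L),r)$.
   Context: Lie superalgebras over a field of characteristic $\neq 2,3$: $\mathbb{Z}_2$-graded algebras with graded skew-symmetric bracket satisfying the graded Jacobi identity; homomorphisms are even. $Z(L)$ is the center, $L'=[L,L]$; $L$ is stem if $Z(L)\subseteq L'$. $L,M$ are isoclinic if there are isomorphisms $\varphi:L/Z(L)\to M/Z(M)$, $\theta:L'\to M'$ with $\theta([l,m])=[k,r]$ whenever $k+Z(M)=\varphi(l+Z(L))$, $r+Z(M)=\varphi(m+Z(L))$. A factor set on $L$ is a bilinear map $r:L/Z(L)\times L/Z(L)\to Z(L)$ with, for homogeneous $\bar a,\bar b,\bar c$: $r(\bar a,\bar b)\in Z(L)_{|\bar a|+|\bar b|}$; $r(\bar a,\bar b)=-(-1)^{|\bar a||\bar b|}r(\bar b,\bar a)$; $r([\bar a,\bar b],\bar c)=r(\bar a,[\bar b,\bar c])-(-1)^{|\bar a||\bar b|}r(\bar b,[\bar a,\bar c])$. $(Z(L),L/Z(L),r)$ is the Lie superalgebra of pairs $(x,\bar a)$, $x\in Z(L)$, $\bar a\in L/Z(L)$, graded componentwise, with componentwise addition and bracket $[(x_1,\bar a),(x_2,\bar b)]=(r(\bar a,\bar b),[\bar a,\bar b])$. *)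

theory Defs
  imports Main
begin

text \<open>Lie superalgebras over a field 'k, represented concretely by a carrier set together
with vector space operations, a bracket and a Z2-grading (False = even, True = odd).\<close>

record ('a, 'k) lsa =
  car :: "'a set"
  zer :: 'a
  pls :: "'a \<Rightarrow> 'a \<Rightarrow> 'a"
  sml :: "'k \<Rightarrow> 'a \<Rightarrow> 'a"
  brk :: "'a \<Rightarrow> 'a \<Rightarrow> 'a"
  prt :: "bool \<Rightarrow> 'a set"

definition gsign :: "bool \<Rightarrow> bool \<Rightarrow> 'k::field" where
  "gsign p q = (if p \<and> q then -1 else 1)"

definition is_vspace :: "('a, 'k::field, 'm) lsa_scheme \<Rightarrow> bool" where
  "is_vspace L \<longleftrightarrow>
     zer L \<in> car L \<and>
     (\<forall>x\<in>car L. \<forall>y\<in>car L. pls L x y \<in> car L) \<and>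
     (\<forall>c. \<forall>x\<in>car L. sml L c x \<in> car L) \<and>
     (\<forall>x\<in>car L. \<forall>y\<in>car L. \<forall>z\<in>car L. pls L (pls L x y) z = pls L x (pls L y z)) \<and>
     (\<forall>x\<in>car L. \<forall>y\<in>car L. pls L x y = pls L y x) \<and>
     (\<forall>x\<in>car L. pls L (zer L) x = x) \<and>
     (\<forall>x\<in>car L. pls L x (sml L (-1) x) = zer L) \<and>
     (\<forall>c. \<forall>x\<in>car L. \<forall>y\<in>car L. sml L c (pls L x y) = pls L (sml L c x) (sml L c y)) \<and>
     (\<forall>c d. \<forall>x\<in>car L. sml L (c + d) x = pls L (sml L c x) (sml L d x)) \<and>
     (\<forall>c d. \<forall>x\<in>car L. sml L (c * d) x = sml L c (sml L d x)) \<and>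
     (\<forall>x\<in>car L. sml L 1 x = x)"

definition is_subspace :: "('a, 'k::field, 'm) lsa_scheme \<Rightarrow> 'a set \<Rightarrow> bool" where
  "is_subspace L S \<longleftrightarrow> S \<subseteq> car L \<and> zer L \<in> S \<and>
     (\<forall>x\<in>S. \<forall>y\<in>S. pls L x y \<in> S) \<and> (\<forall>c. \<forall>x\<in>S. sml L c x \<in> S)"

definition lie_superalgebra :: "('a, 'k::field, 'm) lsa_scheme \<Rightarrow> bool" where
  "lie_superalgebra L \<longleftrightarrow>
     is_vspace L \<and>
     (\<forall>p. is_subspace L (prt L p)) \<and>
     prt L False \<inter> prt L True = {zer L} \<and>
     (\<forall>x\<in>car L. \<exists>a\<in>prt L False. \<exists>b\<in>prt L True. x = pls L a b) \<and>
     (\<forall>x\<in>car L. \<forall>y\<in>car L. brk L x y \<in> car L) \<and>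
     (\<forall>x\<in>car L. \<forall>y\<in>car L. \<forall>z\<in>car L. brk L (pls L x y) z = pls L (brk L x z) (brk L y z)) \<and>
     (\<forall>x\<in>car L. \<forall>y\<in>car L. \<forall>z\<in>car L. brk L z (pls L x y) = pls L (brk L z x) (brk L z y)) \<and>
     (\<forall>c. \<forall>x\<in>car L. \<forall>y\<in>car L. brk L (sml L c x) y = sml L c (brk L x y)) \<and>
     (\<forall>c. \<forall>x\<in>car L. \<forall>y\<in>car L. brk L x (sml L c y) = sml L c (brk L x y)) \<and>
     (\<forall>p q. \<forall>a\<in>prt L p. \<forall>b\<in>prt L q. brk L a b \<in> prt L (p \<noteq> q)) \<and>
     (\<forall>p q. \<forall>a\<in>prt L p. \<forall>b\<in>prt L q.
        brk L a b = sml L (- gsign p q) (brk L b a)) \<and>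
     (\<forall>p q r. \<forall>a\<in>prt L p. \<forall>b\<in>prt L q. \<forall>c\<in>prt L r.
        brk L a (brk L b c) = pls L (brk L (brk L a b) c) (sml L (gsign p q) (brk L b (brk L a c))))"

fun lincomb :: "('a, 'k, 'm) lsa_scheme \<Rightarrow> ('k \<times> 'a) list \<Rightarrow> 'a" where
  "lincomb L [] = zer L"
| "lincomb L ((c, v) # xs) = pls L (sml L c v) (lincomb L xs)"

definition fin_dim :: "('a, 'k, 'm) lsa_scheme \<Rightarrow> bool" where
  "fin_dim L \<longleftrightarrow> (\<exists>vs. set vs \<subseteq> car L \<and>
     (\<forall>x\<in>car L. \<exists>cs. length cs = length vs \<and> x = lincomb L (zip cs vs)))"

definition center :: "('a, 'k, 'm) lsa_scheme \<Rightarrow> 'a set" where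
  "center L = {z \<in> car L. \<forall>x\<in>car L. brk L z x = zer L}"

definition derived :: "('a, 'k, 'm) lsa_scheme \<Rightarrow> 'a set" where
  "derived L = {lincomb L xs | xs. \<forall>cv\<in>set xs. \<exists>a\<in>car L. \<exists>b\<in>car L. snd cv = brk L a b}"

definition stem :: "('a, 'k, 'm) lsa_scheme \<Rightarrow> bool" where
  "stem L \<longleftrightarrow> center L \<subseteq> derived L"

definition subalg :: "('a, 'k) lsa \<Rightarrow> 'a set \<Rightarrow> ('a, 'k) lsa" where
  "subalg L S = L\<lparr>car := S, prt := (\<lambda>p. prt L p \<inter> S)\<rparr>"

definition coset :: "('a, 'k) lsa \<Rightarrow> 'a set \<Rightarrow> 'a \<Rightarrow> 'a set" where
  "coset L I x = {pls L x z | z. z \<in> I}"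

definition rep :: "'a set \<Rightarrow> 'a" where
  "rep A = (SOME a. a \<in> A)"

definition quot :: "('a, 'k) lsa \<Rightarrow> 'a set \<Rightarrow> ('a set, 'k) lsa" where
  "quot L I = \<lparr>car = coset L I ` car L,
              zer = coset L I (zer L),
              pls = (\<lambda>A B. coset L I (pls L (rep A) (rep B))),
              sml = (\<lambda>c A. coset L I (sml L c (rep A))),
              brk = (\<lambda>A B. coset L I (brk L (rep A) (rep B))),
              prt = (\<lambda>p. coset L I ` prt L p)\<rparr>"

abbreviation centralquot :: "('a, 'k) lsa \<Rightarrow> ('a set, 'k) lsa" where
  "centralquot L \<equiv> quot L (center L)"

definition is_hom :: "('a, 'k) lsa \<Rightarrow> ('b, 'k) lsa \<Rightarrow> ('a \<Rightarrow> 'b) \<Rightarrow> bool" where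
  "is_hom L M f \<longleftrightarrow>
     f ` car L \<subseteq> car M \<and>
     (\<forall>x\<in>car L. \<forall>y\<in>car L. f (pls L x y) = pls M (f x) (f y)) \<and>
     (\<forall>c. \<forall>x\<in>car L. f (sml L c x) = sml M c (f x)) \<and>
     (\<forall>x\<in>car L. \<forall>y\<in>car L. f (brk L x y) = brk M (f x) (f y)) \<and>
     (\<forall>p. f ` prt L p \<subseteq> prt M p)"

definition is_iso :: "('a, 'k) lsa \<Rightarrow> ('b, 'k) lsa \<Rightarrow> ('a \<Rightarrow> 'b) \<Rightarrow> bool" where
  "is_iso L M f \<longleftrightarrow> is_hom L M f \<and> bij_betw f (car L) (car M)"

definition isomorphic :: "('a, 'k) lsa \<Rightarrow> ('b, 'k) lsa \<Rightarrow> bool" where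
  "isomorphic L M \<longleftrightarrow> (\<exists>f. is_iso L M f)"

definition isoclinic :: "('a, 'k) lsa \<Rightarrow> ('b, 'k) lsa \<Rightarrow> bool" where
  "isoclinic L M \<longleftrightarrow>
     (\<exists>\<phi> \<theta>. is_iso (centralquot L) (centralquot M) \<phi> \<and>
            is_iso (subalg L (derived L)) (subalg M (derived M)) \<theta> \<and>
            (\<forall>l\<in>car L. \<forall>m\<in>car L. \<forall>k\<in>car M. \<forall>r\<in>car M.
               coset M (center M) k = \<phi> (coset L (center L) l) \<longrightarrow>
               coset M (center M) r = \<phi> (coset L (center L) m) \<longrightarrow>
               \<theta> (brk L l m) = brk M k r))"

definition factor_set :: "('a, 'k::field) lsa \<Rightarrow> ('a set \<Rightarrow> 'a set \<Rightarrow> 'a) \<Rightarrow> bool" where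
  "factor_set L r \<longleftrightarrow>
     (let Q = centralquot L in
       (\<forall>A\<in>car Q. \<forall>B\<in>car Q. r A B \<in> center L) \<and>
       (\<forall>A\<in>car Q. \<forall>B\<in>car Q. \<forall>C\<in>car Q. r (pls Q A B) C = pls L (r A C) (r B C)) \<and>
       (\<forall>A\<in>car Q. \<forall>B\<in>car Q. \<forall>C\<in>car Q. r C (pls Q A B) = pls L (r C A) (r C B)) \<and>
       (\<forall>c. \<forall>A\<in>car Q. \<forall>B\<in>car Q. r (sml Q c A) B = sml L c (r A B)) \<and>
       (\<forall>c. \<forall>A\<in>car Q. \<forall>B\<in>car Q. r A (sml Q c B) = sml L c (r A B)) \<and>
       (\<forall>p q. \<forall>A\<in>prt Q p. \<forall>B\<in>prt Q q. r A B \<in> center L \<inter> prt L (p \<noteq> q)) \<and>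
       (\<forall>p q. \<forall>A\<in>prt Q p. \<forall>B\<in>prt Q q. r A B = sml L (- gsign p q) (r B A)) \<and>
       (\<forall>p q s. \<forall>A\<in>prt Q p. \<forall>B\<in>prt Q q. \<forall>C\<in>prt Q s.
          r (brk Q A B) C = pls L (r A (brk Q B C)) (sml L (- gsign p q) (r B (brk Q A C)))))"

definition fs_alg :: "('a, 'k) lsa \<Rightarrow> ('a set \<Rightarrow> 'a set \<Rightarrow> 'a) \<Rightarrow> ('a \<times> 'a set, 'k) lsa" where
  "fs_alg L r =
     (let Q = centralquot L in
      \<lparr>car = center L \<times> car Q,
       zer = (zer L, zer Q),
       pls = (\<lambda>(x1, a) (x2, b). (pls L x1 x2, pls Q a b)),
       sml = (\<lambda>c (x, a). (sml L c x, sml Q c a)),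
       brk = (\<lambda>(x1, a) (x2, b). (r a b, brk Q a b)),
       prt = (\<lambda>p. (center L \<inter> prt L p) \<times> prt Q p)\<rparr>)"

end

(* Since M is finite-dimensional, its centre Z(M), a graded subspace, has a graded complement,
   so there is a degree-preserving linear projection P of M onto Z(M).  Stemness gives
   Z(L) <= L' and Z(M) <= M'; as the isoclinism (phi, theta) satisfies
   phi(w + Z(L)) = theta(w) + Z(M) for w in L', theta restricts to an isomorphism Z(L) -> Z(M).
   For classes A, B of L/Z(L) choose representatives a, b in M of phi(A), phi(B) and put
   r(A, B) = theta^-1(P [a, b]), which does not depend on the choice since brackets in M only
   depend on classes modulo Z(M).  Then m |-> (theta^-1(P m), phi^-1(m + Z(M))) is an
   isomorphism from M onto (Z(L), L/Z(L), r), and the factor set identities of r are the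
   bilinearity, graded skew-symmetry and graded Jacobi identity of M, transported by the
   linear map theta^-1 o P. *)

theory Submission
  imports Defs
begin

section \<open>Vector spaces and Lie superalgebras\<close>

locale lsa_vspace =
  fixes V :: "('a, 'k::field, 'm) lsa_scheme"
  assumes is_vspace: "is_vspace V"
begin

lemma
  shows zero_closed [simp]: "zer V \<in> car V"
    and add_closed [simp]: "x \<in> car V \<Longrightarrow> y \<in> car V \<Longrightarrow> pls V x y \<in> car V"
    and smult_closed [simp]: "x \<in> car V \<Longrightarrow> sml V c x \<in> car V"
    and add_assoc: "x \<in> car V \<Longrightarrow> y \<in> car V \<Longrightarrow> z \<in> car V \<Longrightarrow>
      pls V (pls V x y) z = pls V x (pls V y z)"
    and add_commute: "x \<in> car V \<Longrightarrow> y \<in> car V \<Longrightarrow> pls V x y = pls V y x"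
    and add_0_left [simp]: "x \<in> car V \<Longrightarrow> pls V (zer V) x = x"
    and add_right_inverse [simp]: "x \<in> car V \<Longrightarrow> pls V x (sml V (-1) x) = zer V"
    and smult_add_right: "x \<in> car V \<Longrightarrow> y \<in> car V \<Longrightarrow>
      sml V c (pls V x y) = pls V (sml V c x) (sml V c y)"
    and smult_add_left: "x \<in> car V \<Longrightarrow> sml V (c + d) x = pls V (sml V c x) (sml V d x)"
    and smult_smult [simp]: "x \<in> car V \<Longrightarrow> sml V c (sml V d x) = sml V (c * d) x"
    and smult_one [simp]: "x \<in> car V \<Longrightarrow> sml V 1 x = x"
  using is_vspace unfolding is_vspace_def by auto

lemma add_left_commute:
  "x \<in> car V \<Longrightarrow> y \<in> car V \<Longrightarrow> z \<in> car V \<Longrightarrow> pls V x (pls V y z) = pls V y (pls V x z)"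
  by (metis add_assoc add_commute)

lemmas add_ac = add_assoc add_commute add_left_commute

lemma add_0_right [simp]: "x \<in> car V \<Longrightarrow> pls V x (zer V) = x"
  using add_commute[of x "zer V"] by simp

lemma add_left_inverse [simp]: "x \<in> car V \<Longrightarrow> pls V (sml V (-1) x) x = zer V"
  by (simp add: add_commute)

lemma add_minus_cancel [simp]:
  "x \<in> car V \<Longrightarrow> y \<in> car V \<Longrightarrow> pls V x (pls V (sml V (-1) x) y) = y"
  by (simp flip: add_assoc)

lemma minus_add_cancel [simp]:
  "x \<in> car V \<Longrightarrow> y \<in> car V \<Longrightarrow> pls V (sml V (-1) x) (pls V x y) = y"
  by (simp flip: add_assoc)

lemma add_left_cancel [simp]:
  "x \<in> car V \<Longrightarrow> y \<in> car V \<Longrightarrow> z \<in> car V \<Longrightarrow> pls V x y = pls V x z \<longleftrightarrow> y = z"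
  by (metis minus_add_cancel smult_closed)

lemma smult_zero_right [simp]: "sml V c (zer V) = zer V"
  using smult_add_right[of "zer V" "zer V" c]
    add_left_cancel[of "sml V c (zer V)" "sml V c (zer V)" "zer V"] by simp

lemma smult_zero_left [simp]: "x \<in> car V \<Longrightarrow> sml V 0 x = zer V"
  using smult_add_left[of x 0 0] add_left_cancel[of "sml V 0 x" "sml V 0 x" "zer V"] by simp

lemma minus_unique: "x \<in> car V \<Longrightarrow> y \<in> car V \<Longrightarrow> pls V x y = zer V \<Longrightarrow> y = sml V (-1) x"
  by (metis add_left_cancel add_right_inverse smult_closed)

lemma diff_eq_zero_iff [simp]:
  assumes "x \<in> car V" "y \<in> car V"
  shows "pls V x (sml V (-1) y) = zer V \<longleftrightarrow> x = y"
proof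
  assume "pls V x (sml V (-1) y) = zer V"
  then have "sml V (-1) (sml V (-1) y) = sml V (-1) (sml V (-1) x)"
    using minus_unique[of x "sml V (-1) y"] assms by simp
  then show "x = y"
    using assms by simp
qed (use assms in simp)

lemma eq_diff_of_eq_add:
  "x \<in> car V \<Longrightarrow> y \<in> car V \<Longrightarrow> z \<in> car V \<Longrightarrow> x = pls V y z \<Longrightarrow> y = pls V x (sml V (-1) z)"
  by (simp add: add_ac)

lemma diff_eq_diff_swap:
  assumes "a \<in> car V" "b \<in> car V" "c \<in> car V" "d \<in> car V" and "pls V a b = pls V c d"
  shows "pls V a (sml V (-1) c) = pls V d (sml V (-1) b)"
proof -
  have "pls V a (sml V (-1) c) = pls V (pls V a b) (pls V (sml V (-1) b) (sml V (-1) c))"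
    using assms(1-4) by (simp add: add_ac)
  also have "\<dots> = pls V (pls V c d) (pls V (sml V (-1) b) (sml V (-1) c))"
    using assms(5) by simp
  also have "\<dots> = pls V d (pls V c (pls V (sml V (-1) b) (sml V (-1) c)))"
    using assms(1-4) by (simp add: add_ac)
  also have "\<dots> = pls V d (pls V (sml V (-1) b) (pls V c (sml V (-1) c)))"
    using assms(1-4) by (simp add: add_left_commute[of c])
  also have "\<dots> = pls V d (sml V (-1) b)"
    using assms(1-4) by simp
  finally show ?thesis .
qed

end

lemma subspace_subset: "is_subspace V S \<Longrightarrow> x \<in> S \<Longrightarrow> x \<in> car V"
  and subspace_zero: "is_subspace V S \<Longrightarrow> zer V \<in> S"
  and subspace_add: "is_subspace V S \<Longrightarrow> x \<in> S \<Longrightarrow> y \<in> S \<Longrightarrow> pls V x y \<in> S"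
  and subspace_smult: "is_subspace V S \<Longrightarrow> x \<in> S \<Longrightarrow> sml V c x \<in> S"
  unfolding is_subspace_def by blast+

lemma subspace_diff: "is_subspace V S \<Longrightarrow> x \<in> S \<Longrightarrow> y \<in> S \<Longrightarrow> pls V x (sml V (-1) y) \<in> S"
  by (simp add: subspace_add subspace_smult)

definition is_graded :: "('a, 'k, 'm) lsa_scheme \<Rightarrow> 'a set \<Rightarrow> bool" where
  "is_graded V S \<longleftrightarrow> (\<forall>x\<in>S. \<exists>a\<in>S \<inter> prt V False. \<exists>b\<in>S \<inter> prt V True. x = pls V a b)"

fun span_list :: "('a, 'k, 'm) lsa_scheme \<Rightarrow> 'a list \<Rightarrow> 'a set" where
  "span_list V [] = {zer V}"
| "span_list V (v # vs) = {pls V (sml V c v) y | c y. y \<in> span_list V vs}"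

definition subspace_sum :: "('a, 'k, 'm) lsa_scheme \<Rightarrow> 'a set \<Rightarrow> 'a set \<Rightarrow> 'a set" where
  "subspace_sum V A B = {pls V a b | a b. a \<in> A \<and> b \<in> B}"

definition multiples :: "('a, 'k, 'm) lsa_scheme \<Rightarrow> 'a \<Rightarrow> 'a set" where
  "multiples V v = {sml V c v | c. True}"

lemma multiples_mem [simp]: "sml V c v \<in> multiples V v"
  unfolding multiples_def by blast

lemma subspace_sum_mem: "a \<in> A \<Longrightarrow> b \<in> B \<Longrightarrow> pls V a b \<in> subspace_sum V A B"
  unfolding subspace_sum_def by blast

context lsa_vspace
begin

lemma span_list_subset: "set vs \<subseteq> car V \<Longrightarrow> span_list V vs \<subseteq> car V"
  by (induction vs) auto

lemma lincomb_in_span_list: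
  "length cs = length vs \<Longrightarrow> lincomb V (zip cs vs) \<in> span_list V vs"
proof (induction vs arbitrary: cs)
  case (Cons v vs)
  then obtain c cs' where "cs = c # cs'"
    by (cases cs) auto
  with Cons show ?case
    by auto
qed simp

lemma subspace_zero_set: "is_subspace V {zer V}"
  unfolding is_subspace_def by simp

lemma subspace_multiples: "v \<in> car V \<Longrightarrow> is_subspace V (multiples V v)"
  unfolding is_subspace_def multiples_def
proof (intro conjI ballI allI)
  assume v: "v \<in> car V"
  show "{sml V c v |c. True} \<subseteq> car V"
    using v by auto
  show "zer V \<in> {sml V c v |c. True}"
    using v smult_zero_left[OF v, symmetric] by blast
  fix x y assume "x \<in> {sml V c v |c. True}" "y \<in> {sml V c v |c. True}"
  then show "pls V x y \<in> {sml V c v |c. True}"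
    using v by (auto simp flip: smult_add_left)
next
  fix c x assume "v \<in> car V" "x \<in> {sml V c v |c. True}"
  then show "sml V c x \<in> {sml V c v |c. True}"
    by auto
qed

lemma subspace_subspace_sum:
  assumes A: "is_subspace V A" and B: "is_subspace V B"
  shows "is_subspace V (subspace_sum V A B)"
  unfolding is_subspace_def
proof (intro conjI ballI allI)
  show "subspace_sum V A B \<subseteq> car V"
    using A B subspace_subset add_closed unfolding subspace_sum_def by fastforce
  show "zer V \<in> subspace_sum V A B"
    using subspace_sum_mem[of "zer V" A "zer V" B V] subspace_zero[OF A] subspace_zero[OF B]
    by simp
next
  fix x y assume "x \<in> subspace_sum V A B" "y \<in> subspace_sum V A B"
  then obtain a b a' b' where ab: "a \<in> A" "b \<in> B" "x = pls V a b" "a' \<in> A" "b' \<in> B" "y = pls V a' b'"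
    unfolding subspace_sum_def by blast
  moreover have "a \<in> car V" "b \<in> car V" "a' \<in> car V" "b' \<in> car V"
    using subspace_subset[OF A ab(1)] subspace_subset[OF B ab(2)]
      subspace_subset[OF A ab(4)] subspace_subset[OF B ab(5)] by simp_all
  ultimately have "pls V x y = pls V (pls V a a') (pls V b b')"
    by (simp add: add_ac)
  then show "pls V x y \<in> subspace_sum V A B"
    using subspace_sum_mem[OF subspace_add[OF A ab(1,4)] subspace_add[OF B ab(2,5)]] by simp
next
  fix c x assume "x \<in> subspace_sum V A B"
  then obtain a b where ab: "a \<in> A" "b \<in> B" "x = pls V a b"
    unfolding subspace_sum_def by blast
  moreover have "a \<in> car V" "b \<in> car V"
    using subspace_subset[OF A ab(1)] subspace_subset[OF B ab(2)] by simp_all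
  ultimately have "sml V c x = pls V (sml V c a) (sml V c b)"
    by (simp add: smult_add_right)
  then show "sml V c x \<in> subspace_sum V A B"
    using subspace_sum_mem[OF subspace_smult[OF A ab(1)] subspace_smult[OF B ab(2)]] by simp
qed

lemma subspace_sum_multiples_inter:
  assumes S: "is_subspace V S" and v: "v \<in> car V" "v \<notin> S" and W: "W \<subseteq> car V"
    and disjoint: "subspace_sum V S (multiples V v) \<inter> W = {zer V}"
  shows "S \<inter> subspace_sum V W (multiples V v) = {zer V}"
proof
  show "{zer V} \<subseteq> S \<inter> subspace_sum V W (multiples V v)"
    using subspace_zero[OF S] disjoint subspace_sum_mem[of "zer V" W "zer V" "multiples V v" V]
      smult_zero_left[OF v(1)] multiples_mem[of V 0 v] by auto
  show "S \<inter> subspace_sum V W (multiples V v) \<subseteq> {zer V}"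
  proof
    fix s assume s: "s \<in> S \<inter> subspace_sum V W (multiples V v)"
    then obtain w d where w: "w \<in> W" and sw: "s = pls V w (sml V d v)"
      unfolding subspace_sum_def multiples_def by blast
    have "w = pls V s (sml V (- d) v)"
      using eq_diff_of_eq_add[OF _ _ _ sw] s w W v subspace_subset[OF S] by auto
    then have "w \<in> subspace_sum V S (multiples V v)"
      using s subspace_sum_mem[of s S "sml V (- d) v" "multiples V v" V] by simp
    then have "w = zer V"
      using w disjoint by blast
    then have sdv: "s = sml V d v"
      using sw v by simp
    show "s \<in> {zer V}"
    proof (cases "d = 0")
      case False
      then have "v = sml V (inverse d) s"
        using sdv v by simp
      then have "v \<in> S"
        using s subspace_smult[OF S] by simp
      with v show ?thesis
        by simp
    qed (use sdv v in simp)
  qed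
qed

lemma span_list_cons_subset_sum:
  assumes S: "is_subspace V S" and W: "is_subspace V W" and v: "v \<in> S"
    and spans: "span_list V vs \<subseteq> subspace_sum V S W"
  shows "span_list V (v # vs) \<subseteq> subspace_sum V S W"
proof
  fix x assume "x \<in> span_list V (v # vs)"
  then obtain c s w where sw: "s \<in> S" "w \<in> W" and x: "x = pls V (sml V c v) (pls V s w)"
    using spans unfolding subspace_sum_def by auto
  have "x = pls V (pls V (sml V c v) s) w"
    using x sw v subspace_subset[OF S] subspace_subset[OF W] by (simp add: add_assoc)
  moreover have "pls V (sml V c v) s \<in> S"
    using subspace_add[OF S subspace_smult[OF S v] sw(1)] .
  ultimately show "x \<in> subspace_sum V S W"
    using sw(2) by (simp add: subspace_sum_mem)
qed

lemma span_list_cons_subset_sum_multiples: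
  assumes S: "is_subspace V S" and W: "is_subspace V W" and v: "v \<in> car V"
    and spans: "span_list V vs \<subseteq> subspace_sum V (subspace_sum V S (multiples V v)) W"
  shows "span_list V (v # vs) \<subseteq> subspace_sum V S (subspace_sum V W (multiples V v))"
proof
  fix x assume "x \<in> span_list V (v # vs)"
  then obtain c s d w where s: "s \<in> S" and w: "w \<in> W"
    and x: "x = pls V (sml V c v) (pls V (pls V s (sml V d v)) w)"
    using spans unfolding subspace_sum_def multiples_def by auto
  have "x = pls V s (pls V w (sml V (c + d) v))"
    using x s w v subspace_subset[OF S] subspace_subset[OF W] by (simp add: smult_add_left add_ac)
  moreover have "pls V w (sml V (c + d) v) \<in> subspace_sum V W (multiples V v)"
    using w by (simp add: subspace_sum_mem)
  ultimately show "x \<in> subspace_sum V S (subspace_sum V W (multiples V v))"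
    using s by (simp add: subspace_sum_mem)
qed

end

locale lie_superalg =
  fixes L :: "('a, 'k::field) lsa"
  assumes lie_superalgebra: "lie_superalgebra L"
begin

sublocale lsa_vspace L
  using lie_superalgebra unfolding lie_superalgebra_def by unfold_locales blast

lemma prt_subspace: "is_subspace L (prt L p)"
  using lie_superalgebra unfolding lie_superalgebra_def by metis

lemma prt_disjoint: "prt L False \<inter> prt L True = {zer L}"
  using lie_superalgebra unfolding lie_superalgebra_def by metis

lemma prt_decomp: "x \<in> car L \<Longrightarrow> \<exists>a\<in>prt L False. \<exists>b\<in>prt L True. x = pls L a b"
  using lie_superalgebra unfolding lie_superalgebra_def by metis

lemma brk_closed [simp]: "x \<in> car L \<Longrightarrow> y \<in> car L \<Longrightarrow> brk L x y \<in> car L"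
  using lie_superalgebra unfolding lie_superalgebra_def by metis

lemma brk_add_left: "x \<in> car L \<Longrightarrow> y \<in> car L \<Longrightarrow> z \<in> car L \<Longrightarrow>
    brk L (pls L x y) z = pls L (brk L x z) (brk L y z)"
  using lie_superalgebra unfolding lie_superalgebra_def by metis

lemma brk_add_right: "x \<in> car L \<Longrightarrow> y \<in> car L \<Longrightarrow> z \<in> car L \<Longrightarrow>
    brk L z (pls L x y) = pls L (brk L z x) (brk L z y)"
  using lie_superalgebra unfolding lie_superalgebra_def by metis

lemma brk_smult_left: "x \<in> car L \<Longrightarrow> y \<in> car L \<Longrightarrow> brk L (sml L c x) y = sml L c (brk L x y)"
  using lie_superalgebra unfolding lie_superalgebra_def by metis

lemma brk_smult_right: "x \<in> car L \<Longrightarrow> y \<in> car L \<Longrightarrow> brk L x (sml L c y) = sml L c (brk L x y)"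
  using lie_superalgebra unfolding lie_superalgebra_def by metis

lemma brk_prt: "a \<in> prt L p \<Longrightarrow> b \<in> prt L q \<Longrightarrow> brk L a b \<in> prt L (p \<noteq> q)"
  using lie_superalgebra unfolding lie_superalgebra_def by metis

lemma brk_skew: "a \<in> prt L p \<Longrightarrow> b \<in> prt L q \<Longrightarrow> brk L a b = sml L (- gsign p q) (brk L b a)"
  using lie_superalgebra unfolding lie_superalgebra_def by metis

lemma jacobi: "x \<in> prt L p \<Longrightarrow> y \<in> prt L q \<Longrightarrow> z \<in> prt L s \<Longrightarrow>
    brk L x (brk L y z) = pls L (brk L (brk L x y) z) (sml L (gsign p q) (brk L y (brk L x z)))"
  using lie_superalgebra unfolding lie_superalgebra_def by metis

lemma prt_car [simp]: "x \<in> prt L p \<Longrightarrow> x \<in> car L"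
  by (rule subspace_subset[OF prt_subspace])

lemma prt_zero [simp]: "zer L \<in> prt L p"
  by (rule subspace_zero[OF prt_subspace])

lemma prt_add [simp]: "x \<in> prt L p \<Longrightarrow> y \<in> prt L p \<Longrightarrow> pls L x y \<in> prt L p"
  by (rule subspace_add[OF prt_subspace])

lemma prt_smult [simp]: "x \<in> prt L p \<Longrightarrow> sml L c x \<in> prt L p"
  by (rule subspace_smult[OF prt_subspace])

lemma prt_inter_eq_zero: "x \<in> prt L p \<Longrightarrow> x \<in> prt L (\<not> p) \<Longrightarrow> x = zer L"
  using prt_disjoint by (cases p) auto

lemma brk_zero_left [simp]: "x \<in> car L \<Longrightarrow> brk L (zer L) x = zer L"
  using brk_smult_left[of "zer L" x 0] by simp

lemma jacobi_left:
  assumes "x \<in> prt L p" "y \<in> prt L q" "z \<in> prt L s"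
  shows "brk L (brk L x y) z = pls L (brk L x (brk L y z)) (sml L (- gsign p q) (brk L y (brk L x z)))"
  using eq_diff_of_eq_add[OF _ _ _ jacobi[OF assms]] assms by simp

lemma homogeneous_decomp_unique:
  assumes "a \<in> prt L p" "b \<in> prt L (\<not> p)" "a' \<in> prt L p" "b' \<in> prt L (\<not> p)"
    and eq: "pls L a b = pls L a' b'"
  shows "a = a'" "b = b'"
proof -
  have diff: "pls L a (sml L (-1) a') = pls L b' (sml L (-1) b)"
    using diff_eq_diff_swap[OF _ _ _ _ eq] assms(1-4) by simp
  then have "pls L a (sml L (-1) a') \<in> prt L (\<not> p)"
    using assms(2,4) by simp
  then have "pls L a (sml L (-1) a') = zer L"
    using assms(1,3) prt_inter_eq_zero by simp
  then show "a = a'" "b = b'"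
    using diff assms(1-4) by simp_all
qed

lemma homogeneous_sum_eq_zero:
  "a \<in> prt L p \<Longrightarrow> b \<in> prt L (\<not> p) \<Longrightarrow> pls L a b = zer L \<Longrightarrow> a = zer L \<and> b = zer L"
  using homogeneous_decomp_unique[of a p b "zer L" "zer L"] by simp

lemma graded_decomp:
  assumes "is_graded L S" "x \<in> S"
  shows "\<exists>a\<in>S \<inter> prt L p. \<exists>b\<in>S \<inter> prt L (\<not> p). x = pls L a b"
proof -
  obtain a b where ab: "a \<in> S \<inter> prt L False" "b \<in> S \<inter> prt L True" "x = pls L a b"
    using assms unfolding is_graded_def by blast
  have swap: "x = pls L b a"
    using ab add_commute[of a b] by auto
  show ?thesis
  proof (cases p)
    case True
    then show ?thesis
      using ab(1,2) swap by auto
  next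
    case False
    then show ?thesis
      using ab by auto
  qed
qed

lemma graded_car: "is_graded L (car L)"
  unfolding is_graded_def using prt_decomp by fastforce

lemma homogeneous_decomp: "x \<in> car L \<Longrightarrow> \<exists>a\<in>prt L p. \<exists>b\<in>prt L (\<not> p). x = pls L a b"
  using graded_decomp[OF graded_car] by blast

section \<open>Graded complements and projections\<close>

lemma graded_zero_set: "is_graded L {zer L}"
  unfolding is_graded_def by simp

lemma graded_multiples:
  assumes v: "v \<in> prt L p"
  shows "is_graded L (multiples L v)"
  unfolding is_graded_def
proof
  fix x assume "x \<in> multiples L v"
  then have x: "x \<in> multiples L v \<inter> prt L p"
    using v unfolding multiples_def by auto
  have zero: "zer L \<in> multiples L v \<inter> prt L q" for q
    using multiples_mem[of L 0 v] v by simp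
  show "\<exists>a\<in>multiples L v \<inter> prt L False. \<exists>b\<in>multiples L v \<inter> prt L True. x = pls L a b"
  proof (cases p)
    case True
    then show ?thesis
      using x zero[of False] by force
  next
    case False
    then show ?thesis
      using x zero[of True] by force
  qed
qed

lemma graded_subspace_sum:
  assumes A: "is_subspace L A" "is_graded L A" and B: "is_subspace L B" "is_graded L B"
  shows "is_graded L (subspace_sum L A B)"
  unfolding is_graded_def
proof
  fix x assume "x \<in> subspace_sum L A B"
  then obtain a b where ab: "a \<in> A" "b \<in> B" and x: "x = pls L a b"
    unfolding subspace_sum_def by blast
  obtain a0 a1 where a: "a0 \<in> A \<inter> prt L False" "a1 \<in> A \<inter> prt L True" "a = pls L a0 a1"
    using A(2) ab(1) unfolding is_graded_def by blast
  obtain b0 b1 where b: "b0 \<in> B \<inter> prt L False" "b1 \<in> B \<inter> prt L True" "b = pls L b0 b1"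
    using B(2) ab(2) unfolding is_graded_def by blast
  have "a0 \<in> car L" "a1 \<in> car L" "b0 \<in> car L" "b1 \<in> car L"
    using a(1,2) b(1,2) by auto
  then have "x = pls L (pls L a0 b0) (pls L a1 b1)"
    using x a(3) b(3) by (simp add: add_ac)
  moreover have "pls L a0 b0 \<in> subspace_sum L A B \<inter> prt L False"
    using a(1) b(1) subspace_sum_mem[of a0 A b0 B L] by simp
  moreover have "pls L a1 b1 \<in> subspace_sum L A B \<inter> prt L True"
    using a(2) b(2) subspace_sum_mem[of a1 A b1 B L] by simp
  ultimately show "\<exists>a\<in>subspace_sum L A B \<inter> prt L False. \<exists>b\<in>subspace_sum L A B \<inter> prt L True.
      x = pls L a b"
    by blast
qed

lemma homogeneous_spanning_list:
  "set vs \<subseteq> car L \<Longrightarrow> \<exists>hs. set hs \<subseteq> prt L False \<union> prt L True \<and> span_list L vs \<subseteq> span_list L hs"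
proof (induction vs)
  case (Cons v vs)
  then obtain hs where hs: "set hs \<subseteq> prt L False \<union> prt L True" "span_list L vs \<subseteq> span_list L hs"
    by auto
  have "v \<in> car L"
    using Cons.prems by simp
  then obtain a b where ab: "a \<in> prt L False" "b \<in> prt L True" "v = pls L a b"
    using prt_decomp by blast
  have hs_car: "set hs \<subseteq> car L"
    using hs(1) by auto
  have "span_list L (v # vs) \<subseteq> span_list L (a # b # hs)"
  proof
    fix x assume "x \<in> span_list L (v # vs)"
    then obtain c y where y: "y \<in> span_list L hs" and x: "x = pls L (sml L c v) y"
      using hs(2) by auto
    have "y \<in> car L"
      using y span_list_subset[OF hs_car] by blast
    then have "x = pls L (sml L c a) (pls L (sml L c b) y)"
      using x ab by (simp add: smult_add_right add_assoc)
    then show "x \<in> span_list L (a # b # hs)"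
      using y by auto
  qed
  then show ?case
    using hs ab by (intro exI[of _ "a # b # hs"]) auto
qed (intro exI[of _ "[]"], simp)

lemma graded_complement_exists:
  "set hs \<subseteq> prt L False \<union> prt L True \<Longrightarrow> is_subspace L S \<Longrightarrow> is_graded L S \<Longrightarrow>
   \<exists>W. is_subspace L W \<and> is_graded L W \<and> S \<inter> W = {zer L} \<and> span_list L hs \<subseteq> subspace_sum L S W"
proof (induction hs arbitrary: S)
  case Nil
  have "zer L \<in> S"
    using subspace_zero[OF Nil(2)] .
  moreover have "zer L \<in> subspace_sum L S {zer L}"
    using subspace_sum_mem[OF \<open>zer L \<in> S\<close>, of "zer L" "{zer L}" L] by simp
  ultimately show ?case
    using subspace_zero_set graded_zero_set by (intro exI[of _ "{zer L}"]) auto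
next
  case (Cons v hs)
  obtain p where vp: "v \<in> prt L p"
    using Cons.prems(1) by auto
  then have v: "v \<in> car L"
    by simp
  show ?case
  proof (cases "v \<in> S")
    case True
    obtain W where W: "is_subspace L W" "is_graded L W" "S \<inter> W = {zer L}"
      and spans: "span_list L hs \<subseteq> subspace_sum L S W"
      using Cons.IH[OF _ Cons.prems(2,3)] Cons.prems(1) by auto
    then show ?thesis
      using span_list_cons_subset_sum[OF Cons.prems(2) W(1) True spans] by blast
  next
    case False
    define S' where "S' = subspace_sum L S (multiples L v)"
    have S': "is_subspace L S'" "is_graded L S'"
      unfolding S'_def using subspace_subspace_sum[OF Cons.prems(2) subspace_multiples[OF v]]
        graded_subspace_sum[OF Cons.prems(2,3) subspace_multiples[OF v] graded_multiples[OF vp]]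
      by simp_all
    obtain W' where W': "is_subspace L W'" "is_graded L W'" "S' \<inter> W' = {zer L}"
      and spans': "span_list L hs \<subseteq> subspace_sum L S' W'"
      using Cons.IH[OF _ S'] Cons.prems(1) by auto
    define W where "W = subspace_sum L W' (multiples L v)"
    have "is_subspace L W" "is_graded L W"
      unfolding W_def using subspace_subspace_sum[OF W'(1) subspace_multiples[OF v]]
        graded_subspace_sum[OF W'(1,2) subspace_multiples[OF v] graded_multiples[OF vp]] by simp_all
    moreover have "S \<inter> W = {zer L}"
      unfolding W_def using subspace_sum_multiples_inter[OF Cons.prems(2) v False] W'(3)
        subspace_subset[OF W'(1)] unfolding S'_def by blast
    moreover have "span_list L (v # hs) \<subseteq> subspace_sum L S W"
      unfolding W_def using span_list_cons_subset_sum_multiples[OF Cons.prems(2) W'(1) v] spans'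
      unfolding S'_def by blast
    ultimately show ?thesis
      by blast
  qed
qed

end

definition graded_projection :: "('a, 'k::field, 'm) lsa_scheme \<Rightarrow> 'a set \<Rightarrow> ('a \<Rightarrow> 'a) \<Rightarrow> bool" where
  "graded_projection V S P \<longleftrightarrow>
     (\<forall>x\<in>car V. P x \<in> S) \<and> (\<forall>s\<in>S. P s = s) \<and>
     (\<forall>x\<in>car V. \<forall>y\<in>car V. P (pls V x y) = pls V (P x) (P y)) \<and>
     (\<forall>c. \<forall>x\<in>car V. P (sml V c x) = sml V c (P x)) \<and>
     (\<forall>p. \<forall>x\<in>prt V p. P x \<in> prt V p)"

locale graded_direct_sum = lie_superalg L for L :: "('a, 'k::field) lsa" +
  fixes S W :: "'a set"
  assumes subspace_S: "is_subspace L S" and graded_S: "is_graded L S"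
    and subspace_W: "is_subspace L W" and graded_W: "is_graded L W"
    and disjoint: "S \<inter> W = {zer L}"
    and spanning: "car L \<subseteq> subspace_sum L S W"
begin

definition proj :: "'a \<Rightarrow> 'a" where
  "proj x = (THE s. s \<in> S \<and> (\<exists>w\<in>W. x = pls L s w))"

lemma S_car: "s \<in> S \<Longrightarrow> s \<in> car L"
  by (rule subspace_subset[OF subspace_S])

lemma W_car: "w \<in> W \<Longrightarrow> w \<in> car L"
  by (rule subspace_subset[OF subspace_W])

lemma decomp_unique:
  assumes "s \<in> S" "w \<in> W" "s' \<in> S" "w' \<in> W" and eq: "pls L s w = pls L s' w'"
  shows "s = s'"
proof -
  have diff: "pls L s (sml L (-1) s') = pls L w' (sml L (-1) w)"
    using diff_eq_diff_swap[OF _ _ _ _ eq] assms(1-4) S_car W_car by simp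
  have "pls L s (sml L (-1) s') \<in> S"
    using subspace_diff[OF subspace_S assms(1,3)] .
  moreover have "pls L w' (sml L (-1) w) \<in> W"
    using subspace_diff[OF subspace_W assms(4,2)] .
  ultimately have "pls L s (sml L (-1) s') = zer L"
    using diff disjoint by auto
  then show ?thesis
    using assms(1,3) S_car by simp
qed

lemma proj_eq: "s \<in> S \<Longrightarrow> w \<in> W \<Longrightarrow> proj (pls L s w) = s"
  unfolding proj_def by (rule the_equality) (auto dest: decomp_unique)

lemma proj_decomp:
  assumes "x \<in> car L"
  obtains w where "proj x \<in> S" "w \<in> W" "x = pls L (proj x) w"
proof -
  obtain s w where "s \<in> S" "w \<in> W" "x = pls L s w"
    using assms spanning unfolding subspace_sum_def by blast
  then show ?thesis
    using that proj_eq by simp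
qed

lemma proj_mem: "x \<in> car L \<Longrightarrow> proj x \<in> S"
  by (rule proj_decomp) simp

lemma proj_id: "s \<in> S \<Longrightarrow> proj s = s"
  using proj_eq[of s "zer L"] subspace_zero[OF subspace_W] S_car by simp

lemma proj_add:
  assumes x: "x \<in> car L" and y: "y \<in> car L"
  shows "proj (pls L x y) = pls L (proj x) (proj y)"
proof -
  obtain wx where wx: "proj x \<in> S" "wx \<in> W" "x = pls L (proj x) wx"
    using proj_decomp[OF x] .
  obtain wy where wy: "proj y \<in> S" "wy \<in> W" "y = pls L (proj y) wy"
    using proj_decomp[OF y] .
  have "pls L (pls L (proj x) wx) (pls L (proj y) wy) = pls L (pls L (proj x) (proj y)) (pls L wx wy)"
    using wx(1,2) wy(1,2) S_car W_car by (simp add: add_ac)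
  then have "pls L x y = pls L (pls L (proj x) (proj y)) (pls L wx wy)"
    using wx(3) wy(3) by simp
  then show ?thesis
    using proj_eq[OF subspace_add[OF subspace_S wx(1) wy(1)] subspace_add[OF subspace_W wx(2) wy(2)]]
    by simp
qed

lemma proj_smult:
  assumes x: "x \<in> car L"
  shows "proj (sml L c x) = sml L c (proj x)"
proof -
  obtain w where w: "proj x \<in> S" "w \<in> W" "x = pls L (proj x) w"
    using proj_decomp[OF x] .
  have "sml L c x = pls L (sml L c (proj x)) (sml L c w)"
    using smult_add_right[OF S_car[OF w(1)] W_car[OF w(2)]] w(3) by simp
  then show ?thesis
    using proj_eq[OF subspace_smult[OF subspace_S w(1)] subspace_smult[OF subspace_W w(2)]] by simp
qed

text \<open>Comparing the homogeneous components of \<open>x = proj x + w\<close>, the component of \<open>proj x\<close>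
  of the wrong parity is minus a component of \<open>w\<close>, hence lies in \<open>S \<inter> W = 0\<close>.\<close>

lemma proj_prt:
  assumes xp: "x \<in> prt L p"
  shows "proj x \<in> prt L p"
proof -
  obtain w where w: "proj x \<in> S" "w \<in> W" "x = pls L (proj x) w"
    using proj_decomp[of x] xp by auto
  obtain s0 s1 where s: "s0 \<in> S \<inter> prt L p" "s1 \<in> S \<inter> prt L (\<not> p)" "proj x = pls L s0 s1"
    using graded_decomp[OF graded_S w(1)] by blast
  obtain w0 w1 where ww: "w0 \<in> W \<inter> prt L p" "w1 \<in> W \<inter> prt L (\<not> p)" "w = pls L w0 w1"
    using graded_decomp[OF graded_W w(2)] by blast
  have car: "s0 \<in> car L" "s1 \<in> car L" "w0 \<in> car L" "w1 \<in> car L"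
    using s(1,2) ww(1,2) S_car W_car by auto
  then have "pls L (pls L s0 w0) (pls L s1 w1) = pls L x (zer L)"
    using w(3) s(3) ww(3) by (simp add: add_ac)
  then have "pls L s1 w1 = zer L"
    using homogeneous_decomp_unique(2)[of "pls L s0 w0" p "pls L s1 w1" x "zer L"] s ww xp by simp
  then have "w1 = sml L (-1) s1"
    using minus_unique[OF car(2,4)] by simp
  then have "w1 \<in> S \<inter> W"
    using subspace_smult[OF subspace_S] s(2) ww(2) by simp
  then have "w1 = zer L"
    using disjoint by simp
  then have "s1 = zer L"
    using \<open>pls L s1 w1 = zer L\<close> car(2) by simp
  then show ?thesis
    using s by simp
qed

lemma graded_projection_proj: "graded_projection L S proj"
  unfolding graded_projection_def using proj_mem proj_id proj_add proj_smult proj_prt by blast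

end

lemma (in lie_superalg) graded_projection_exists:
  assumes "fin_dim L" and S: "is_subspace L S" "is_graded L S"
  obtains P where "graded_projection L S P"
proof -
  obtain vs where vs: "set vs \<subseteq> car L"
    and coords: "\<forall>x\<in>car L. \<exists>cs. length cs = length vs \<and> x = lincomb L (zip cs vs)"
    using assms(1) unfolding fin_dim_def by blast
  obtain hs where hs: "set hs \<subseteq> prt L False \<union> prt L True" "span_list L vs \<subseteq> span_list L hs"
    using homogeneous_spanning_list[OF vs] by blast
  obtain W where W: "is_subspace L W" "is_graded L W" "S \<inter> W = {zer L}"
    and spans: "span_list L hs \<subseteq> subspace_sum L S W"
    using graded_complement_exists[OF hs(1) S] by blast
  have "car L \<subseteq> span_list L vs"
  proof
    fix x assume "x \<in> car L"
    then obtain cs where "length cs = length vs" "x = lincomb L (zip cs vs)"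
      using coords by blast
    then show "x \<in> span_list L vs"
      using lincomb_in_span_list by simp
  qed
  then have "car L \<subseteq> subspace_sum L S W"
    using hs(2) spans by blast
  then interpret graded_direct_sum L S W
    using S W by (simp add: graded_direct_sum_def graded_direct_sum_axioms_def lie_superalg_axioms)
  show ?thesis
    using that graded_projection_proj by blast
qed

section \<open>The centre and the central quotient\<close>

context lie_superalg
begin

lemma center_car: "z \<in> center L \<Longrightarrow> z \<in> car L"
  unfolding center_def by blast

lemma center_brk_left: "z \<in> center L \<Longrightarrow> x \<in> car L \<Longrightarrow> brk L z x = zer L"
  unfolding center_def by blast

lemma mem_centerI: "z \<in> car L \<Longrightarrow> (\<And>x. x \<in> car L \<Longrightarrow> brk L z x = zer L) \<Longrightarrow> z \<in> center L"
  unfolding center_def by blast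

lemma subspace_center: "is_subspace L (center L)"
  unfolding is_subspace_def
proof (intro conjI ballI allI)
  show "center L \<subseteq> car L" "zer L \<in> center L"
    by (auto simp: center_def)
next
  fix x y assume x: "x \<in> center L" and y: "y \<in> center L"
  show "pls L x y \<in> center L"
    using center_car[OF x] center_car[OF y]
    by (intro mem_centerI) (simp_all add: brk_add_left center_brk_left[OF x] center_brk_left[OF y])
next
  fix c x assume x: "x \<in> center L"
  show "sml L c x \<in> center L"
    using center_car[OF x] by (intro mem_centerI) (simp_all add: brk_smult_left center_brk_left[OF x])
qed

lemma center_add: "z \<in> center L \<Longrightarrow> z' \<in> center L \<Longrightarrow> pls L z z' \<in> center L"
  by (rule subspace_add[OF subspace_center])

lemma center_smult: "z \<in> center L \<Longrightarrow> sml L c z \<in> center L"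
  by (rule subspace_smult[OF subspace_center])

lemma center_zero: "zer L \<in> center L"
  by (rule subspace_zero[OF subspace_center])

lemma graded_center: "is_graded L (center L)"
  unfolding is_graded_def
proof
  fix z assume z: "z \<in> center L"
  then obtain a b where ab: "a \<in> prt L False" "b \<in> prt L True" "z = pls L a b"
    using prt_decomp center_car by blast
  have homogeneous: "brk L a x = zer L \<and> brk L b x = zer L" if x: "x \<in> prt L q" for x q
  proof -
    have "pls L (brk L a x) (brk L b x) = zer L"
      using brk_add_left[of a b x] ab x center_brk_left[OF z] by simp
    moreover have "brk L a x \<in> prt L (False \<noteq> q)" "brk L b x \<in> prt L (\<not> (False \<noteq> q))"
      using brk_prt[OF ab(1) x] brk_prt[OF ab(2) x] by simp_all
    ultimately show ?thesis
      using homogeneous_sum_eq_zero by blast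
  qed
  have "brk L a x = zer L \<and> brk L b x = zer L" if x: "x \<in> car L" for x
  proof -
    obtain x0 x1 where x01: "x0 \<in> prt L False" "x1 \<in> prt L True" "x = pls L x0 x1"
      using prt_decomp x by blast
    then show ?thesis
      using homogeneous[OF x01(1)] homogeneous[OF x01(2)] ab(1,2)
        brk_add_right[of x0 x1 a] brk_add_right[of x0 x1 b] by simp
  qed
  then have "a \<in> center L" "b \<in> center L"
    using ab(1,2) by (auto intro: mem_centerI)
  then show "\<exists>a\<in>center L \<inter> prt L False. \<exists>b\<in>center L \<inter> prt L True. z = pls L a b"
    using ab by blast
qed

lemma center_brk_right:
  assumes z: "z \<in> center L" and x: "x \<in> car L"
  shows "brk L x z = zer L"
proof -
  have homogeneous: "brk L y w = zer L" if "y \<in> prt L p" "w \<in> center L \<inter> prt L q" for y w p q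
    using brk_skew[of y p w q] center_brk_left[of w y] that by simp
  obtain x0 x1 where x01: "x0 \<in> prt L False" "x1 \<in> prt L True" "x = pls L x0 x1"
    using prt_decomp x by blast
  have x_homogeneous: "brk L x w = zer L" if "w \<in> center L \<inter> prt L q" for w q
    using homogeneous[OF x01(1) that] homogeneous[OF x01(2) that] brk_add_left[of x0 x1 w] x01
      center_car that by simp
  obtain a b where ab: "a \<in> center L \<inter> prt L False" "b \<in> center L \<inter> prt L True" "z = pls L a b"
    using graded_center z unfolding is_graded_def by blast
  then show ?thesis
    using x_homogeneous[OF ab(1)] x_homogeneous[OF ab(2)] brk_add_right[of a b x] x by auto
qed

lemma brk_add_center:
  assumes "x \<in> car L" "y \<in> car L" "z \<in> center L" "z' \<in> center L"
  shows "brk L (pls L x z) (pls L y z') = brk L x y"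
  using assms by (simp add: brk_add_left brk_add_right center_brk_left center_brk_right center_car)

abbreviation cls :: "'a \<Rightarrow> 'a set" where
  "cls \<equiv> coset L (center L)"

lemma mem_cls_iff: "y \<in> cls x \<longleftrightarrow> (\<exists>z\<in>center L. y = pls L x z)"
  unfolding coset_def by blast

lemma cls_self: "x \<in> car L \<Longrightarrow> x \<in> cls x"
  using mem_cls_iff center_zero by force

lemma cls_eq_iff:
  assumes x: "x \<in> car L" and y: "y \<in> car L"
  shows "cls x = cls y \<longleftrightarrow> (\<exists>z\<in>center L. x = pls L y z)"
proof
  assume "cls x = cls y"
  then show "\<exists>z\<in>center L. x = pls L y z"
    using cls_self[OF x] mem_cls_iff by blast
next
  assume "\<exists>z\<in>center L. x = pls L y z"
  then obtain z where z: "z \<in> center L" and xyz: "x = pls L y z"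
    by blast
  have zc: "z \<in> car L"
    using center_car[OF z] .
  show "cls x = cls y"
  proof (rule set_eqI, rule iffI)
    fix w assume "w \<in> cls x"
    then obtain z' where z': "z' \<in> center L" "w = pls L x z'"
      by (auto simp: mem_cls_iff)
    then have "w = pls L y (pls L z z')"
      using xyz y zc center_car by (simp add: add_assoc)
    then show "w \<in> cls y"
      using mem_cls_iff center_add[OF z z'(1)] by blast
  next
    fix w assume "w \<in> cls y"
    then obtain z' where z': "z' \<in> center L" "w = pls L y z'"
      by (auto simp: mem_cls_iff)
    have "y = pls L x (sml L (-1) z)"
      using eq_diff_of_eq_add[OF x y zc xyz] .
    then have "w = pls L x (pls L (sml L (-1) z) z')"
      using z' x zc center_car by (simp add: add_assoc)
    then show "w \<in> cls x"
      using mem_cls_iff center_add[OF center_smult[OF z] z'(1)] by blast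
  qed
qed

lemma cls_eq_zero_iff: "x \<in> car L \<Longrightarrow> cls x = cls (zer L) \<longleftrightarrow> x \<in> center L"
  using cls_eq_iff[of x "zer L"] center_car by auto

lemma rep_cls: "x \<in> car L \<Longrightarrow> \<exists>z\<in>center L. rep (cls x) = pls L x z"
  using someI[of "\<lambda>a. a \<in> cls x", OF cls_self] unfolding rep_def mem_cls_iff by blast

lemma rep_cls_car: "x \<in> car L \<Longrightarrow> rep (cls x) \<in> car L"
  using rep_cls center_car by fastforce

lemma cls_rep: "x \<in> car L \<Longrightarrow> cls (rep (cls x)) = cls x"
  using rep_cls rep_cls_car cls_eq_iff by blast

lemma quot_car: "car (centralquot L) = cls ` car L"
  and quot_prt: "prt (centralquot L) p = cls ` prt L p"
  unfolding quot_def by simp_all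

lemma cls_car: "x \<in> car L \<Longrightarrow> cls x \<in> car (centralquot L)"
  using quot_car by simp

lemma quot_rep: "X \<in> car (centralquot L) \<Longrightarrow> rep X \<in> car L \<and> cls (rep X) = X"
  using quot_car rep_cls_car cls_rep by auto

lemma quot_add: "x \<in> car L \<Longrightarrow> y \<in> car L \<Longrightarrow> pls (centralquot L) (cls x) (cls y) = cls (pls L x y)"
proof -
  assume x: "x \<in> car L" and y: "y \<in> car L"
  obtain z z' where z: "z \<in> center L" "rep (cls x) = pls L x z"
    and z': "z' \<in> center L" "rep (cls y) = pls L y z'"
    using rep_cls x y by meson
  have "pls L (rep (cls x)) (rep (cls y)) = pls L (pls L x y) (pls L z z')"
    using z z' x y center_car by (simp add: add_ac)
  then have "cls (pls L (rep (cls x)) (rep (cls y))) = cls (pls L x y)"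
    by (intro cls_eq_iff[THEN iffD2] bexI[of _ "pls L z z'"])
      (use x y rep_cls_car center_add[OF z(1) z'(1)] center_car in auto)
  then show ?thesis
    unfolding quot_def by simp
qed

lemma quot_smult: "x \<in> car L \<Longrightarrow> sml (centralquot L) c (cls x) = cls (sml L c x)"
proof -
  assume x: "x \<in> car L"
  obtain z where z: "z \<in> center L" "rep (cls x) = pls L x z"
    using rep_cls x by blast
  have "sml L c (rep (cls x)) = pls L (sml L c x) (sml L c z)"
    using z x center_car by (simp add: smult_add_right)
  then have "cls (sml L c (rep (cls x))) = cls (sml L c x)"
    by (intro cls_eq_iff[THEN iffD2] bexI[of _ "sml L c z"])
      (use x rep_cls_car center_smult[OF z(1)] center_car in auto)
  then show ?thesis
    unfolding quot_def by simp
qed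

lemma quot_brk: "x \<in> car L \<Longrightarrow> y \<in> car L \<Longrightarrow> brk (centralquot L) (cls x) (cls y) = cls (brk L x y)"
proof -
  assume x: "x \<in> car L" and y: "y \<in> car L"
  obtain z z' where "z \<in> center L" "rep (cls x) = pls L x z" "z' \<in> center L" "rep (cls y) = pls L y z'"
    using rep_cls x y by meson
  then have "brk L (rep (cls x)) (rep (cls y)) = brk L x y"
    using brk_add_center x y by simp
  then show ?thesis
    unfolding quot_def by simp
qed

lemma quot_add_closed:
  "X \<in> car (centralquot L) \<Longrightarrow> Y \<in> car (centralquot L) \<Longrightarrow> pls (centralquot L) X Y \<in> car (centralquot L)"
  using quot_car quot_add by auto

lemma quot_smult_closed: "X \<in> car (centralquot L) \<Longrightarrow> sml (centralquot L) c X \<in> car (centralquot L)"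
  using quot_car quot_smult by auto

lemma quot_brk_closed:
  "X \<in> car (centralquot L) \<Longrightarrow> Y \<in> car (centralquot L) \<Longrightarrow> brk (centralquot L) X Y \<in> car (centralquot L)"
  using quot_car quot_brk by auto

lemma quot_prt_car: "X \<in> prt (centralquot L) p \<Longrightarrow> X \<in> car (centralquot L)"
  using quot_prt quot_car by auto

lemma cls_homogeneous_component:
  assumes x: "x \<in> prt L p" and a: "a \<in> prt L p" and b: "b \<in> prt L (\<not> p)"
    and eq: "cls x = cls (pls L a b)"
  shows "b \<in> center L"
proof -
  obtain z where z: "z \<in> center L" "x = pls L (pls L a b) z"
    using eq x a b cls_eq_iff by auto
  obtain z0 z1 where zz: "z0 \<in> center L \<inter> prt L p" "z1 \<in> center L \<inter> prt L (\<not> p)" "z = pls L z0 z1"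
    using graded_decomp[OF graded_center z(1)] by blast
  have car: "a \<in> car L" "b \<in> car L" "z0 \<in> car L" "z1 \<in> car L"
    using a b zz(1,2) by auto
  then have "pls L (pls L a z0) (pls L b z1) = pls L x (zer L)"
    using x z(2) zz(3) by (simp add: add_ac)
  then have "pls L b z1 = zer L"
    using homogeneous_decomp_unique(2)[of "pls L a z0" p "pls L b z1" x "zer L"] a b zz(1,2) x by simp
  then have "pls L z1 b = zer L"
    using add_commute car(2,4) by simp
  then have "b = sml L (-1) z1"
    using minus_unique car(2,4) by blast
  then show ?thesis
    using center_smult zz(2) by simp
qed

lemma lincomb_car: "\<forall>cv\<in>set xs. snd cv \<in> car L \<Longrightarrow> lincomb L xs \<in> car L"
proof (induction xs)
  case (Cons cv xs)
  then show ?case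
    by (cases cv) simp
qed simp

lemma lincomb_brackets_derived:
  "\<forall>cv\<in>set xs. \<exists>a\<in>car L. \<exists>b\<in>car L. snd cv = brk L a b \<Longrightarrow> lincomb L xs \<in> derived L"
  unfolding derived_def by blast

lemma derived_car: "x \<in> derived L \<Longrightarrow> x \<in> car L"
  unfolding derived_def using lincomb_car brk_closed by fastforce

lemma smult_brk_derived:
  assumes "a \<in> car L" "b \<in> car L"
  shows "sml L c (brk L a b) \<in> derived L"
proof -
  have "lincomb L [(c, brk L a b)] \<in> derived L"
    using assms by (intro lincomb_brackets_derived) auto
  then show ?thesis
    using assms by simp
qed

lemma brk_derived: "a \<in> car L \<Longrightarrow> b \<in> car L \<Longrightarrow> brk L a b \<in> derived L"
  using smult_brk_derived[of a b 1] by simp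

lemma zero_derived: "zer L \<in> derived L"
  using lincomb_brackets_derived[of "[]"] by simp

end

section \<open>Isoclinisms\<close>

locale isoclinism = L: lie_superalg L + M: lie_superalg M
  for L :: "('a, 'k::field) lsa" and M :: "('b, 'k) lsa" +
  fixes \<phi> :: "'a set \<Rightarrow> 'b set" and \<theta> :: "'a \<Rightarrow> 'b"
  assumes phi_iso: "is_iso (centralquot L) (centralquot M) \<phi>"
    and theta_iso: "is_iso (subalg L (derived L)) (subalg M (derived M)) \<theta>"
    and compatible: "\<lbrakk>l \<in> car L; m \<in> car L; k \<in> car M; r \<in> car M;
        coset M (center M) k = \<phi> (coset L (center L) l); coset M (center M) r = \<phi> (coset L (center L) m)\<rbrakk>
        \<Longrightarrow> \<theta> (brk L l m) = brk M k r"
    and stem_L: "stem L" and stem_M: "stem M"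
begin

lemma theta_derived: "x \<in> derived L \<Longrightarrow> \<theta> x \<in> derived M"
  and theta_add: "x \<in> derived L \<Longrightarrow> y \<in> derived L \<Longrightarrow> \<theta> (pls L x y) = pls M (\<theta> x) (\<theta> y)"
  and theta_smult: "x \<in> derived L \<Longrightarrow> \<theta> (sml L c x) = sml M c (\<theta> x)"
  and theta_bij: "bij_betw \<theta> (derived L) (derived M)"
  using theta_iso unfolding is_iso_def is_hom_def subalg_def by auto

lemma theta_prt: "x \<in> derived L \<Longrightarrow> x \<in> prt L p \<Longrightarrow> \<theta> x \<in> prt M p"
  using theta_iso unfolding is_iso_def is_hom_def subalg_def by simp blast

lemma theta_inj: "inj_on \<theta> (derived L)"
  using theta_bij by (rule bij_betw_imp_inj_on)

lemma theta_image: "\<theta> ` derived L = derived M"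
  using theta_bij by (rule bij_betw_imp_surj_on)

lemma phi_car: "X \<in> car (centralquot L) \<Longrightarrow> \<phi> X \<in> car (centralquot M)"
  and phi_add: "X \<in> car (centralquot L) \<Longrightarrow> Y \<in> car (centralquot L) \<Longrightarrow>
    \<phi> (pls (centralquot L) X Y) = pls (centralquot M) (\<phi> X) (\<phi> Y)"
  and phi_smult: "X \<in> car (centralquot L) \<Longrightarrow> \<phi> (sml (centralquot L) c X) = sml (centralquot M) c (\<phi> X)"
  and phi_brk: "X \<in> car (centralquot L) \<Longrightarrow> Y \<in> car (centralquot L) \<Longrightarrow>
    \<phi> (brk (centralquot L) X Y) = brk (centralquot M) (\<phi> X) (\<phi> Y)"
  and phi_bij: "bij_betw \<phi> (car (centralquot L)) (car (centralquot M))"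
  using phi_iso unfolding is_iso_def is_hom_def by auto

lemma phi_prt: "X \<in> prt (centralquot L) p \<Longrightarrow> \<phi> X \<in> prt (centralquot M) p"
  using phi_iso unfolding is_iso_def is_hom_def by blast

lemma phi_inj: "inj_on \<phi> (car (centralquot L))"
  using phi_bij by (rule bij_betw_imp_inj_on)

lemma phi_image: "\<phi> ` car (centralquot L) = car (centralquot M)"
  using phi_bij by (rule bij_betw_imp_surj_on)

lemma phi_cls: "x \<in> car L \<Longrightarrow> \<exists>y\<in>car M. \<phi> (L.cls x) = M.cls y"
  using phi_car[of "L.cls x"] L.quot_car M.quot_car by auto

lemma theta_zero: "\<theta> (zer L) = zer M"
  using theta_smult[OF L.zero_derived, of 0] M.derived_car[OF theta_derived[OF L.zero_derived]]
  by simp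

lemma phi_zero: "\<phi> (L.cls (zer L)) = M.cls (zer M)"
proof -
  obtain y where y: "y \<in> car M" "\<phi> (L.cls (zer L)) = M.cls y"
    using phi_cls[OF L.zero_closed] by blast
  have "\<phi> (L.cls (zer L)) = \<phi> (sml (centralquot L) 0 (L.cls (zer L)))"
    using L.quot_smult[of "zer L" 0] by simp
  also have "\<dots> = sml (centralquot M) 0 (M.cls y)"
    using phi_smult[of "L.cls (zer L)" 0] y(2) L.quot_car by simp
  also have "\<dots> = M.cls (zer M)"
    using M.quot_smult[of y 0] y(1) by simp
  finally show ?thesis .
qed

lemma phi_cls_smult_brk_add:
  assumes ab: "a \<in> car L" "b \<in> car L" and w: "w \<in> derived L" "\<phi> (L.cls w) = M.cls (\<theta> w)"
  shows "\<phi> (L.cls (pls L (sml L c (brk L a b)) w)) = M.cls (\<theta> (pls L (sml L c (brk L a b)) w))"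
proof -
  have wc: "w \<in> car L" "\<theta> w \<in> car M"
    using L.derived_car[OF w(1)] M.derived_car[OF theta_derived[OF w(1)]] .
  obtain k where k: "k \<in> car M" "M.cls k = \<phi> (L.cls a)"
    using phi_cls[OF ab(1)] by force
  obtain r where r: "r \<in> car M" "M.cls r = \<phi> (L.cls b)"
    using phi_cls[OF ab(2)] by force
  have "\<theta> (pls L (sml L c (brk L a b)) w) = pls M (sml M c (brk M k r)) (\<theta> w)"
    using theta_add[OF L.smult_brk_derived[OF ab] w(1)] theta_smult[OF L.brk_derived[OF ab]]
      compatible[OF ab k(1) r(1) k(2) r(2)] by simp
  then have "M.cls (\<theta> (pls L (sml L c (brk L a b)) w)) =
      pls (centralquot M) (sml (centralquot M) c (brk (centralquot M) (M.cls k) (M.cls r))) (M.cls (\<theta> w))"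
    using k(1) r(1) wc(2) by (simp add: M.quot_add M.quot_smult M.quot_brk)
  also have "\<dots> = pls (centralquot M)
      (sml (centralquot M) c (brk (centralquot M) (\<phi> (L.cls a)) (\<phi> (L.cls b)))) (\<phi> (L.cls w))"
    using k(2) r(2) w(2) by simp
  also have "\<dots> = \<phi> (pls (centralquot L)
      (sml (centralquot L) c (brk (centralquot L) (L.cls a) (L.cls b))) (L.cls w))"
    using ab wc(1) L.quot_car L.quot_brk_closed L.quot_smult_closed
    by (simp add: phi_add phi_smult phi_brk)
  also have "\<dots> = \<phi> (L.cls (pls L (sml L c (brk L a b)) w))"
    using ab wc(1) by (simp add: L.quot_brk L.quot_smult L.quot_add)
  finally show ?thesis ..
qed

text \<open>By linearity it suffices to compare \<open>\<theta>\<close> and \<open>\<phi>\<close> on brackets, where they agree by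
  the compatibility condition of the isoclinism.\<close>

lemma phi_cls_derived: "w \<in> derived L \<Longrightarrow> \<phi> (L.cls w) = M.cls (\<theta> w)"
proof -
  have "\<phi> (L.cls (lincomb L xs)) = M.cls (\<theta> (lincomb L xs))"
    if "\<forall>cv\<in>set xs. \<exists>a\<in>car L. \<exists>b\<in>car L. snd cv = brk L a b" for xs
    using that
  proof (induction xs)
    case (Cons cv xs)
    then obtain c a b where "cv = (c, brk L a b)" "a \<in> car L" "b \<in> car L"
      by (cases cv) auto
    then show ?case
      using Cons phi_cls_smult_brk_add L.lincomb_brackets_derived by simp
  qed (simp add: phi_zero theta_zero)
  then show "w \<in> derived L \<Longrightarrow> \<phi> (L.cls w) = M.cls (\<theta> w)"
    unfolding derived_def by blast
qed

lemma center_L_derived: "z \<in> center L \<Longrightarrow> z \<in> derived L"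
  using stem_L unfolding stem_def by blast

lemma center_M_derived: "z \<in> center M \<Longrightarrow> z \<in> derived M"
  using stem_M unfolding stem_def by blast

lemma theta_center: "z \<in> center L \<Longrightarrow> \<theta> z \<in> center M"
proof -
  assume z: "z \<in> center L"
  have zd: "z \<in> derived L"
    using center_L_derived[OF z] .
  have "M.cls (\<theta> z) = \<phi> (L.cls z)"
    using phi_cls_derived[OF zd] by simp
  also have "\<dots> = \<phi> (L.cls (zer L))"
    using L.cls_eq_zero_iff[OF L.center_car[OF z]] z by simp
  also have "\<dots> = M.cls (zer M)"
    by (rule phi_zero)
  finally show ?thesis
    using M.cls_eq_zero_iff M.derived_car[OF theta_derived[OF zd]] by simp
qed

definition theta_inv :: "'b \<Rightarrow> 'a" where
  "theta_inv = inv_into (derived L) \<theta>"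

lemma theta_inv_center:
  assumes z: "z \<in> center M"
  shows "theta_inv z \<in> center L" and theta_theta_inv: "\<theta> (theta_inv z) = z"
proof -
  have z_image: "z \<in> \<theta> ` derived L"
    using center_M_derived[OF z] theta_image by simp
  have wd: "theta_inv z \<in> derived L"
    unfolding theta_inv_def using inv_into_into[OF z_image] .
  show tw: "\<theta> (theta_inv z) = z"
    unfolding theta_inv_def using f_inv_into_f[OF z_image] .
  have wc: "theta_inv z \<in> car L"
    using L.derived_car[OF wd] .
  have "\<phi> (L.cls (theta_inv z)) = M.cls z"
    using phi_cls_derived[OF wd] tw by simp
  also have "\<dots> = M.cls (zer M)"
    using M.cls_eq_zero_iff M.center_car z by simp
  also have "\<dots> = \<phi> (L.cls (zer L))"
    using phi_zero by simp
  finally have "L.cls (theta_inv z) = L.cls (zer L)"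
    by (rule inj_onD[OF phi_inj]) (use wc L.quot_car in auto)
  then show "theta_inv z \<in> center L"
    using L.cls_eq_zero_iff wc by simp
qed

lemma theta_inv_theta: "z \<in> center L \<Longrightarrow> theta_inv (\<theta> z) = z"
  unfolding theta_inv_def using inv_into_f_f[OF theta_inj center_L_derived] .

lemma theta_inv_add:
  assumes "z \<in> center M" "z' \<in> center M"
  shows "theta_inv (pls M z z') = pls L (theta_inv z) (theta_inv z')"
proof -
  have c: "theta_inv z \<in> center L" "theta_inv z' \<in> center L"
    using assms by (simp_all add: theta_inv_center)
  have "\<theta> (pls L (theta_inv z) (theta_inv z')) = pls M z z'"
    using theta_add[OF center_L_derived[OF c(1)] center_L_derived[OF c(2)]] assms theta_theta_inv
    by simp
  then show ?thesis
    using theta_inv_theta[OF L.center_add[OF c]] by simp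
qed

lemma theta_inv_smult:
  assumes "z \<in> center M"
  shows "theta_inv (sml M c z) = sml L c (theta_inv z)"
proof -
  have w: "theta_inv z \<in> center L"
    using assms by (simp add: theta_inv_center)
  have "\<theta> (sml L c (theta_inv z)) = sml M c z"
    using theta_smult[OF center_L_derived[OF w]] assms theta_theta_inv by simp
  then show ?thesis
    using theta_inv_theta[OF L.center_smult[OF w, where c = c]] by simp
qed

lemma theta_inv_inj:
  assumes "z \<in> center M" "z' \<in> center M" and eq: "theta_inv z = theta_inv z'"
  shows "z = z'"
proof -
  have "z = \<theta> (theta_inv z)"
    using theta_theta_inv[OF assms(1)] by simp
  also have "\<dots> = z'"
    using theta_theta_inv[OF assms(2)] eq by simp
  finally show ?thesis .
qed

lemma theta_inv_prt:
  assumes z: "z \<in> center M" "z \<in> prt M p"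
  shows "theta_inv z \<in> prt L p"
proof -
  obtain w0 w1 where w0: "w0 \<in> center L \<inter> prt L p" and w1: "w1 \<in> center L \<inter> prt L (\<not> p)"
    and w: "theta_inv z = pls L w0 w1"
    using L.graded_decomp[OF L.graded_center theta_inv_center(1)[OF z(1)]] by blast
  have d: "w0 \<in> derived L" "w1 \<in> derived L"
    using w0 w1 center_L_derived by auto
  have "pls M (\<theta> w0) (\<theta> w1) = pls M z (zer M)"
    using theta_theta_inv[OF z(1)] w theta_add[OF d] z(2) by simp
  then have "\<theta> w1 = zer M"
    using M.homogeneous_decomp_unique(2)[of "\<theta> w0" p "\<theta> w1" z "zer M"] theta_prt d w0 w1 z(2) by simp
  then have "\<theta> w1 = \<theta> (zer L)"
    using theta_zero by simp
  then have "w1 = zer L"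
    using inj_onD[OF theta_inj _ d(2) L.zero_derived] by blast
  then show ?thesis
    using w w0 L.center_car by simp
qed

definition phi_inv :: "'b set \<Rightarrow> 'a set" where
  "phi_inv = inv_into (car (centralquot L)) \<phi>"

lemma phi_inv_car: "X \<in> car (centralquot M) \<Longrightarrow> phi_inv X \<in> car (centralquot L)"
  unfolding phi_inv_def using inv_into_into[of X \<phi>] phi_image by simp

lemma phi_phi_inv: "X \<in> car (centralquot M) \<Longrightarrow> \<phi> (phi_inv X) = X"
  unfolding phi_inv_def using f_inv_into_f[of X \<phi>] phi_image by simp

lemma phi_inv_phi: "X \<in> car (centralquot L) \<Longrightarrow> phi_inv (\<phi> X) = X"
  unfolding phi_inv_def by (rule inv_into_f_f[OF phi_inj])

lemma phi_inv_eqI: "Y \<in> car (centralquot L) \<Longrightarrow> \<phi> Y = X \<Longrightarrow> phi_inv X = Y"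
  using phi_inv_phi by blast

lemma phi_inv_add:
  "X \<in> car (centralquot M) \<Longrightarrow> Y \<in> car (centralquot M) \<Longrightarrow>
    phi_inv (pls (centralquot M) X Y) = pls (centralquot L) (phi_inv X) (phi_inv Y)"
  by (rule phi_inv_eqI) (simp_all add: L.quot_add_closed phi_inv_car phi_add phi_phi_inv)

lemma phi_inv_smult:
  "X \<in> car (centralquot M) \<Longrightarrow> phi_inv (sml (centralquot M) c X) = sml (centralquot L) c (phi_inv X)"
  by (rule phi_inv_eqI) (simp_all add: L.quot_smult_closed phi_inv_car phi_smult phi_phi_inv)

lemma phi_inv_brk:
  "X \<in> car (centralquot M) \<Longrightarrow> Y \<in> car (centralquot M) \<Longrightarrow>
    phi_inv (brk (centralquot M) X Y) = brk (centralquot L) (phi_inv X) (phi_inv Y)"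
  by (rule phi_inv_eqI) (simp_all add: L.quot_brk_closed phi_inv_car phi_brk phi_phi_inv)

lemma phi_inv_inj:
  assumes "X \<in> car (centralquot M)" "Y \<in> car (centralquot M)" and eq: "phi_inv X = phi_inv Y"
  shows "X = Y"
proof -
  have "X = \<phi> (phi_inv X)"
    using phi_phi_inv[OF assms(1)] by simp
  also have "\<dots> = Y"
    using phi_phi_inv[OF assms(2)] eq by simp
  finally show ?thesis .
qed

lemma phi_inv_prt:
  assumes "X \<in> prt (centralquot M) p"
  shows "phi_inv X \<in> prt (centralquot L) p"
proof -
  obtain x where x: "x \<in> prt M p" "X = M.cls x"
    using assms M.quot_prt by auto
  then have X: "X \<in> car (centralquot M)"
    using M.quot_car by simp
  obtain y where y: "y \<in> car L" "phi_inv X = L.cls y"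
    using phi_inv_car[OF X] L.quot_car by auto
  obtain y0 y1 where y0: "y0 \<in> prt L p" and y1: "y1 \<in> prt L (\<not> p)" and y01: "y = pls L y0 y1"
    using L.homogeneous_decomp[OF y(1)] by blast
  obtain m0 where m0: "m0 \<in> prt M p" "\<phi> (L.cls y0) = M.cls m0"
    using phi_prt[of "L.cls y0" p] y0 L.quot_prt M.quot_prt by auto
  obtain m1 where m1: "m1 \<in> prt M (\<not> p)" "\<phi> (L.cls y1) = M.cls m1"
    using phi_prt[of "L.cls y1" "\<not> p"] y1 L.quot_prt M.quot_prt by auto
  have "M.cls x = \<phi> (pls (centralquot L) (L.cls y0) (L.cls y1))"
    using x(2) phi_phi_inv[OF X] y(2) y01 y0 y1 L.quot_add by simp
  also have "\<dots> = M.cls (pls M m0 m1)"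
    using phi_add L.quot_car y0 y1 m0 m1 M.quot_add by simp
  finally have "m1 \<in> center M"
    using M.cls_homogeneous_component x(1) m0(1) m1(1) by blast
  then have "\<phi> (L.cls y1) = \<phi> (L.cls (zer L))"
    using m1 M.cls_eq_zero_iff phi_zero by simp
  then have "L.cls y1 = L.cls (zer L)"
    by (rule inj_onD[OF phi_inj]) (use y1 L.quot_car in auto)
  then have "phi_inv X = L.cls y0"
    using y(2) y01 y0 y1 L.quot_add[of y0 y1] L.quot_add[of y0 "zer L"] by simp
  then show ?thesis
    using y0 L.quot_prt by simp
qed

end

section \<open>The induced factor set\<close>

lemma fs_alg_car: "car (fs_alg L r) = center L \<times> car (centralquot L)"
  and fs_alg_pls: "pls (fs_alg L r) (x, A) (y, B) = (pls L x y, pls (centralquot L) A B)"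
  and fs_alg_sml: "sml (fs_alg L r) c (x, A) = (sml L c x, sml (centralquot L) c A)"
  and fs_alg_brk: "brk (fs_alg L r) (x, A) (y, B) = (r A B, brk (centralquot L) A B)"
  and fs_alg_prt: "prt (fs_alg L r) p = (center L \<inter> prt L p) \<times> prt (centralquot L) p"
  by (simp_all add: fs_alg_def Let_def)

locale isoclinism_projection = isoclinism L M \<phi> \<theta>
  for L :: "('a, 'k::field) lsa" and M :: "('b, 'k) lsa" and \<phi> \<theta> +
  fixes P :: "'b \<Rightarrow> 'b"
  assumes graded_projection_P: "graded_projection M (center M) P"
begin

lemma P_center: "m \<in> car M \<Longrightarrow> P m \<in> center M"
  and P_id: "z \<in> center M \<Longrightarrow> P z = z"
  and P_add: "m \<in> car M \<Longrightarrow> m' \<in> car M \<Longrightarrow> P (pls M m m') = pls M (P m) (P m')"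
  and P_smult: "m \<in> car M \<Longrightarrow> P (sml M c m) = sml M c (P m)"
  using graded_projection_P unfolding graded_projection_def by auto

lemma P_prt: "m \<in> prt M p \<Longrightarrow> P m \<in> prt M p"
  using graded_projection_P unfolding graded_projection_def by blast

definition central_part :: "'b \<Rightarrow> 'a" where
  "central_part m = theta_inv (P m)"

lemma central_part_center: "m \<in> car M \<Longrightarrow> central_part m \<in> center L"
  unfolding central_part_def by (rule theta_inv_center(1)[OF P_center])

lemma central_part_add:
  "m \<in> car M \<Longrightarrow> m' \<in> car M \<Longrightarrow> central_part (pls M m m') = pls L (central_part m) (central_part m')"
  unfolding central_part_def by (simp add: P_add P_center theta_inv_add)

lemma central_part_smult: "m \<in> car M \<Longrightarrow> central_part (sml M c m) = sml L c (central_part m)"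
  unfolding central_part_def by (simp add: P_smult P_center theta_inv_smult)

lemma central_part_prt: "m \<in> prt M p \<Longrightarrow> central_part m \<in> prt L p"
  unfolding central_part_def by (rule theta_inv_prt[OF P_center[OF M.prt_car] P_prt])

lemma central_part_brk_cong:
  assumes "a \<in> car M" "a' \<in> car M" "b \<in> car M" "b' \<in> car M"
    and "M.cls a = M.cls a'" "M.cls b = M.cls b'"
  shows "central_part (brk M a b) = central_part (brk M a' b')"
proof -
  obtain z z' where "z \<in> center M" "a = pls M a' z" "z' \<in> center M" "b = pls M b' z'"
    using assms M.cls_eq_iff by meson
  then show ?thesis
    using M.brk_add_center assms(2,4) by simp
qed

definition rep_phi :: "'a set \<Rightarrow> 'b" where
  "rep_phi A = rep (\<phi> A)"

lemma rep_phi_car: "A \<in> car (centralquot L) \<Longrightarrow> rep_phi A \<in> car M"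
  and cls_rep_phi: "A \<in> car (centralquot L) \<Longrightarrow> M.cls (rep_phi A) = \<phi> A"
  unfolding rep_phi_def using M.quot_rep[OF phi_car] by simp_all

definition induced_fs :: "'a set \<Rightarrow> 'a set \<Rightarrow> 'a" where
  "induced_fs A B = central_part (brk M (rep_phi A) (rep_phi B))"

lemma induced_fs_eq:
  assumes "A \<in> car (centralquot L)" "B \<in> car (centralquot L)" "a \<in> car M" "b \<in> car M"
    and "\<phi> A = M.cls a" "\<phi> B = M.cls b"
  shows "induced_fs A B = central_part (brk M a b)"
  unfolding induced_fs_def using assms rep_phi_car cls_rep_phi by (intro central_part_brk_cong) auto

lemma phi_homogeneous_rep:
  assumes "A \<in> prt (centralquot L) p"
  obtains a where "a \<in> prt M p" "\<phi> A = M.cls a"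
  using phi_prt[OF assms] M.quot_prt by auto

lemma phi_add_rep:
  "A \<in> car (centralquot L) \<Longrightarrow> B \<in> car (centralquot L) \<Longrightarrow>
    \<phi> (pls (centralquot L) A B) = M.cls (pls M (rep_phi A) (rep_phi B))"
  by (simp add: phi_add M.quot_add rep_phi_car flip: cls_rep_phi)

lemma phi_smult_rep:
  "A \<in> car (centralquot L) \<Longrightarrow> \<phi> (sml (centralquot L) c A) = M.cls (sml M c (rep_phi A))"
  by (simp add: phi_smult M.quot_smult rep_phi_car flip: cls_rep_phi)

lemma phi_brk_cls:
  assumes "A \<in> car (centralquot L)" "B \<in> car (centralquot L)" "a \<in> car M" "b \<in> car M"
    and "\<phi> A = M.cls a" "\<phi> B = M.cls b"
  shows "\<phi> (brk (centralquot L) A B) = M.cls (brk M a b)"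
  using assms by (simp add: phi_brk M.quot_brk)

lemma induced_fs_center: "A \<in> car (centralquot L) \<Longrightarrow> B \<in> car (centralquot L) \<Longrightarrow> induced_fs A B \<in> center L"
  unfolding induced_fs_def by (simp add: central_part_center rep_phi_car)

lemma induced_fs_add_left:
  assumes "A \<in> car (centralquot L)" "B \<in> car (centralquot L)" "C \<in> car (centralquot L)"
  shows "induced_fs (pls (centralquot L) A B) C = pls L (induced_fs A C) (induced_fs B C)"
proof -
  have "induced_fs (pls (centralquot L) A B) C = central_part (brk M (pls M (rep_phi A) (rep_phi B)) (rep_phi C))"
    using assms by (intro induced_fs_eq) (simp_all add: L.quot_add_closed rep_phi_car phi_add_rep cls_rep_phi)
  then show ?thesis
    unfolding induced_fs_def using assms by (simp add: rep_phi_car M.brk_add_left central_part_add)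
qed

lemma induced_fs_add_right:
  assumes "A \<in> car (centralquot L)" "B \<in> car (centralquot L)" "C \<in> car (centralquot L)"
  shows "induced_fs C (pls (centralquot L) A B) = pls L (induced_fs C A) (induced_fs C B)"
proof -
  have "induced_fs C (pls (centralquot L) A B) = central_part (brk M (rep_phi C) (pls M (rep_phi A) (rep_phi B)))"
    using assms by (intro induced_fs_eq) (simp_all add: L.quot_add_closed rep_phi_car phi_add_rep cls_rep_phi)
  then show ?thesis
    unfolding induced_fs_def using assms by (simp add: rep_phi_car M.brk_add_right central_part_add)
qed

lemma induced_fs_smult_left:
  assumes "A \<in> car (centralquot L)" "B \<in> car (centralquot L)"
  shows "induced_fs (sml (centralquot L) c A) B = sml L c (induced_fs A B)"
proof -
  have "induced_fs (sml (centralquot L) c A) B = central_part (brk M (sml M c (rep_phi A)) (rep_phi B))"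
    using assms by (intro induced_fs_eq) (simp_all add: L.quot_smult_closed rep_phi_car phi_smult_rep cls_rep_phi)
  then show ?thesis
    unfolding induced_fs_def using assms by (simp add: rep_phi_car M.brk_smult_left central_part_smult)
qed

lemma induced_fs_smult_right:
  assumes "A \<in> car (centralquot L)" "B \<in> car (centralquot L)"
  shows "induced_fs A (sml (centralquot L) c B) = sml L c (induced_fs A B)"
proof -
  have "induced_fs A (sml (centralquot L) c B) = central_part (brk M (rep_phi A) (sml M c (rep_phi B)))"
    using assms by (intro induced_fs_eq) (simp_all add: L.quot_smult_closed rep_phi_car phi_smult_rep cls_rep_phi)
  then show ?thesis
    unfolding induced_fs_def using assms by (simp add: rep_phi_car M.brk_smult_right central_part_smult)
qed

lemma induced_fs_prt:
  assumes A: "A \<in> prt (centralquot L) p" and B: "B \<in> prt (centralquot L) q"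
  shows "induced_fs A B \<in> center L \<inter> prt L (p \<noteq> q)"
proof -
  obtain a b where a: "a \<in> prt M p" "\<phi> A = M.cls a" and b: "b \<in> prt M q" "\<phi> B = M.cls b"
    using phi_homogeneous_rep A B by metis
  then have "induced_fs A B = central_part (brk M a b)"
    using A B L.quot_prt_car by (intro induced_fs_eq) auto
  then show ?thesis
    using central_part_center central_part_prt M.brk_prt[OF a(1) b(1)] by simp
qed

lemma induced_fs_skew:
  assumes A: "A \<in> prt (centralquot L) p" and B: "B \<in> prt (centralquot L) q"
  shows "induced_fs A B = sml L (- gsign p q) (induced_fs B A)"
proof -
  obtain a b where a: "a \<in> prt M p" "\<phi> A = M.cls a" and b: "b \<in> prt M q" "\<phi> B = M.cls b"
    using phi_homogeneous_rep A B by metis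
  have "induced_fs A B = central_part (brk M a b)" "induced_fs B A = central_part (brk M b a)"
    using A B a b L.quot_prt_car by (auto intro: induced_fs_eq)
  then show ?thesis
    using M.brk_skew[OF a(1) b(1)] central_part_smult a(1) b(1) by simp
qed

lemma induced_fs_jacobi:
  assumes A: "A \<in> prt (centralquot L) p" and B: "B \<in> prt (centralquot L) q" and C: "C \<in> prt (centralquot L) s"
  shows "induced_fs (brk (centralquot L) A B) C =
    pls L (induced_fs A (brk (centralquot L) B C)) (sml L (- gsign p q) (induced_fs B (brk (centralquot L) A C)))"
proof -
  obtain a b c where a: "a \<in> prt M p" "\<phi> A = M.cls a" and b: "b \<in> prt M q" "\<phi> B = M.cls b"
    and c: "c \<in> prt M s" "\<phi> C = M.cls c"
    using phi_homogeneous_rep A B C by metis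
  have car: "A \<in> car (centralquot L)" "B \<in> car (centralquot L)" "C \<in> car (centralquot L)"
    "a \<in> car M" "b \<in> car M" "c \<in> car M"
    using A B C a(1) b(1) c(1) L.quot_prt_car by auto
  have "induced_fs (brk (centralquot L) A B) C = central_part (brk M (brk M a b) c)"
    using car a(2) c(2) phi_brk_cls[OF car(1,2,4,5) a(2) b(2)]
    by (intro induced_fs_eq) (simp_all add: L.quot_brk_closed)
  moreover have "induced_fs A (brk (centralquot L) B C) = central_part (brk M a (brk M b c))"
    using car a(2) phi_brk_cls[OF car(2,3,5,6) b(2) c(2)]
    by (intro induced_fs_eq) (simp_all add: L.quot_brk_closed)
  moreover have "induced_fs B (brk (centralquot L) A C) = central_part (brk M b (brk M a c))"
    using car b(2) phi_brk_cls[OF car(1,3,4,6) a(2) c(2)]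
    by (intro induced_fs_eq) (simp_all add: L.quot_brk_closed)
  ultimately show ?thesis
    using M.jacobi_left[OF a(1) b(1) c(1)] car by (simp add: central_part_add central_part_smult)
qed

lemma factor_set_induced_fs: "factor_set L induced_fs"
  unfolding factor_set_def Let_def
  by (intro conjI ballI allI; rule induced_fs_center induced_fs_add_left induced_fs_add_right induced_fs_smult_left
      induced_fs_smult_right induced_fs_prt induced_fs_jacobi induced_fs_skew; assumption)

definition to_fs_alg :: "'b \<Rightarrow> 'a \<times> 'a set" where
  "to_fs_alg m = (central_part m, phi_inv (M.cls m))"

lemma induced_fs_phi_inv:
  assumes "x \<in> car M" "y \<in> car M"
  shows "induced_fs (phi_inv (M.cls x)) (phi_inv (M.cls y)) = central_part (brk M x y)"
  using assms by (intro induced_fs_eq) (simp_all add: M.cls_car phi_inv_car phi_phi_inv)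

lemma is_hom_to_fs_alg: "is_hom M (fs_alg L induced_fs) to_fs_alg"
  unfolding is_hom_def
proof (intro conjI ballI allI subsetI)
  fix u assume "u \<in> to_fs_alg ` car M"
  then show "u \<in> car (fs_alg L induced_fs)"
    unfolding to_fs_alg_def fs_alg_car using central_part_center M.cls_car phi_inv_car by auto
next
  fix x y assume "x \<in> car M" "y \<in> car M"
  then show "to_fs_alg (pls M x y) = pls (fs_alg L induced_fs) (to_fs_alg x) (to_fs_alg y)"
    unfolding to_fs_alg_def fs_alg_pls
    by (simp add: central_part_add phi_inv_add M.cls_car flip: M.quot_add)
next
  fix c x assume "x \<in> car M"
  then show "to_fs_alg (sml M c x) = sml (fs_alg L induced_fs) c (to_fs_alg x)"
    unfolding to_fs_alg_def fs_alg_sml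
    by (simp add: central_part_smult phi_inv_smult M.cls_car flip: M.quot_smult)
next
  fix x y assume "x \<in> car M" "y \<in> car M"
  then show "to_fs_alg (brk M x y) = brk (fs_alg L induced_fs) (to_fs_alg x) (to_fs_alg y)"
    unfolding to_fs_alg_def fs_alg_brk
    by (simp add: induced_fs_phi_inv phi_inv_brk M.cls_car flip: M.quot_brk)
next
  fix p u assume "u \<in> to_fs_alg ` prt M p"
  then obtain m where m: "m \<in> prt M p" and u: "u = to_fs_alg m"
    by blast
  have "phi_inv (M.cls m) \<in> prt (centralquot L) p"
    using phi_inv_prt M.quot_prt m by simp
  then show "u \<in> prt (fs_alg L induced_fs) p"
    unfolding u to_fs_alg_def fs_alg_prt using central_part_center central_part_prt m by simp
qed

lemma inj_on_to_fs_alg: "inj_on to_fs_alg (car M)"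
proof (rule inj_onI)
  fix x y assume x: "x \<in> car M" and y: "y \<in> car M" and eq: "to_fs_alg x = to_fs_alg y"
  then have "phi_inv (M.cls x) = phi_inv (M.cls y)" "theta_inv (P x) = theta_inv (P y)"
    unfolding to_fs_alg_def central_part_def by simp_all
  then have cls_eq: "M.cls x = M.cls y" and P_eq: "P x = P y"
    using phi_inv_inj[OF M.cls_car[OF x] M.cls_car[OF y]] theta_inv_inj[OF P_center[OF x] P_center[OF y]]
    by simp_all
  from cls_eq obtain z where z: "z \<in> center M" and xyz: "x = pls M y z"
    using M.cls_eq_iff x y by blast
  have "pls M (P y) z = pls M (P y) (zer M)"
    using P_eq xyz y z P_add P_id P_center M.center_car by simp
  then have "z = zer M"
    by (simp only: M.add_left_cancel[OF M.center_car[OF P_center[OF y]] M.center_car[OF z] M.zero_closed])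
  then show "x = y"
    using xyz y by simp
qed

text \<open>Surjectivity: the preimage of \<open>(w, A)\<close> is obtained from a representative of \<open>\<phi> A\<close> by
  replacing its central component with \<open>\<theta> w\<close>.\<close>

lemma to_fs_alg_image: "to_fs_alg ` car M = car (fs_alg L induced_fs)"
proof
  show "to_fs_alg ` car M \<subseteq> car (fs_alg L induced_fs)"
    using is_hom_to_fs_alg unfolding is_hom_def by (rule conjunct1)
  show "car (fs_alg L induced_fs) \<subseteq> to_fs_alg ` car M"
  proof
    fix u assume "u \<in> car (fs_alg L induced_fs)"
    then obtain w A where u: "u = (w, A)" and w: "w \<in> center L" and A: "A \<in> car (centralquot L)"
      unfolding fs_alg_car by blast
    define a where "a = rep_phi A"
    have a: "a \<in> car M" "M.cls a = \<phi> A"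
      unfolding a_def using rep_phi_car[OF A] cls_rep_phi[OF A] by simp_all
    have Pa: "P a \<in> center M" and tw: "\<theta> w \<in> center M"
      using P_center[OF a(1)] theta_center[OF w] .
    define z where "z = pls M (sml M (-1) (P a)) (\<theta> w)"
    have z: "z \<in> center M"
      unfolding z_def using M.center_add M.center_smult Pa tw by simp
    define m where "m = pls M a z"
    have m: "m \<in> car M"
      unfolding m_def using a(1) z M.center_car by simp
    have "P m = \<theta> w"
      unfolding m_def z_def using a(1) Pa tw M.center_car
      by (simp add: P_add P_smult P_id flip: M.add_assoc)
    then have "central_part m = w"
      unfolding central_part_def using theta_inv_theta[OF w] by simp
    moreover have "M.cls m = M.cls a"
      using M.cls_eq_iff[OF m a(1)] z unfolding m_def by blast
    ultimately have "to_fs_alg m = u"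
      unfolding to_fs_alg_def u using a(2) phi_inv_phi[OF A] by simp
    then show "u \<in> to_fs_alg ` car M"
      using m by blast
  qed
qed

lemma isomorphic_fs_alg: "isomorphic M (fs_alg L induced_fs)"
  unfolding isomorphic_def is_iso_def bij_betw_def
  using is_hom_to_fs_alg inj_on_to_fs_alg to_fs_alg_image by blast

end

theorem lemma3p3:
  fixes L :: "('a, 'k::field) lsa" and M :: "('b, 'k) lsa"
  assumes "(2::'k) \<noteq> 0" and "(3::'k) \<noteq> 0"
    and "lie_superalgebra L" and "lie_superalgebra M"
    and "fin_dim L" and "fin_dim M"
    and "stem L" and "stem M"
    and "isoclinic L M"
  shows "\<exists>r. factor_set L r \<and> isomorphic M (fs_alg L r)"
proof -
  interpret M: lie_superalg M
    using assms(4) by unfold_locales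
  obtain \<phi> \<theta> where "isoclinism L M \<phi> \<theta>"
    using assms(3,4,7,8,9) unfolding isoclinic_def isoclinism_def isoclinism_axioms_def lie_superalg_def
    by blast
  moreover obtain P where "graded_projection M (center M) P"
    using M.graded_projection_exists[OF assms(6) M.subspace_center M.graded_center] .
  ultimately interpret isoclinism_projection L M \<phi> \<theta> P
    by (simp add: isoclinism_projection_def isoclinism_projection_axioms_def)
  show ?thesis
    using factor_set_induced_fs isomorphic_fs_alg by blast
qed

end
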